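(* Let $\lambda_1,\ldots,\lambda_n\in\mathcal WP^+$, $\pi_\Lambda=\pi_{\lambda_1}\otimes\cdots\otimes\pi_{\lambda_n}$, $\pi_{\tilde\Lambda}=\pi_{\tilde\lambda_1}\otimes\cdots\otimes\pi_{\tilde\lambda_n}$, let $\mathbf i=(i_k,\ldots,i_1)$ be a sequence in $I$ with associated $\mathbf m=(m_k,\ldots,m_1)$, and put $\pi=F_{\mathbf i}\pi_\Lambda$, $\tilde\pi=F_{(\mathbf i,\mathbf m)}\pi_{\tilde\Lambda}$. For $1\le s\le k$ let $\mathbf i_{[s]}=(i_s,\ldots,i_1)$ and $(\mathbf i,\mathbf m)_{[s]}=((i_s,m_s),\ldots,(i_1,m_1))$. If $\pi\ne\mathbf0$, then $\tilde\pi\ne\mathbf0$, and moreover $$H_{i_s}^{F_{\mathbf i_{[s-1]}}\pi_\Lambda}(t)=\tilde H_{(i_s,m_s)}^{F_{(\mathbf i,\mathbf m)_{[s-1]}}\pi_{\tilde\Lambda}}(t)$$ for all $s=1,\ldots,k$ and $t\in[0,1]$ (with $F_{\mathbf i_{[0]}}$, $F_{(\mathbf i,\mathbf m)_{[0]}}$ the identity).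
   Context: $I$ countable, $A=(a_{ij})$ Borcherds–Cartan matrix ($a_{ii}=2$ or $a_{ii}\in\mathbb Z_{\le0}$; $a_{ij}\in\mathbb Z_{\le0}$, $i\ne j$; $a_{ij}=0\iff a_{ji}=0$), $I^{re}=\{a_{ii}=2\}$, $I^{im}=I\setminus I^{re}$, datum $(A,\{\alpha_i\},\{\alpha_i^\vee\},P,P^\vee)$, $\alpha_i^\vee(\alpha_j)=a_{ij}$, linearly independent simple roots/coroots, $P^+$ dominant integral weights. Monoid $\mathcal W$ generated by $r_i$ ($r_i(\mu)=\mu-\alpha_i^\vee(\mu)\alpha_i$) with $r_i^2=1$ (real), $(r_ir_j)^m=(r_jr_i)^m=1$ (real $i\ne j$, $\mathrm{ord}(r_ir_j)=m\in\{2,3,4,6\}$), $r_ir_j=r_jr_i$ ($i\in I^{im}$, $j\ne i$, $a_{ij}=0$), acting on $\mathfrak h^*$; $\mathcal WP^+=\{w\lambda:w\in\mathcal W,\lambda\in P^+\}$. Paths: piecewise-linear $\pi:[0,1]\to\mathfrak h^*_{\mathbb R}$ with $\pi(0)=0$, $\pi(1)\in P$; $\mathbf0$ an extra element. $H_i^\pi(t)=\alpha_i^\vee(\pi(t))$, $m_i^\pi=\min\{H_i^\pi(t)\in\mathbb Z\}$. Root operator $f_i$ ($f_i\mathbf 0=\mathbf0$): $f_+^i=\max\{t:H_i^\pi(t)=m_i^\pi\}$; if $f_+^i=1$, $f_i\pi=\mathbf0$; else $f_-^i=\min\{t\ge f_+^i:H_i^\pi(t)=m_i^\pi+1\}$ and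 $f_i\pi=\pi$ on $[0,f_+^i]$, $\pi-(H_i^\pi-m_i^\pi)\alpha_i$ on $[f_+^i,f_-^i]$, $\pi-\alpha_i$ on $[f_-^i,1]$. $F_{\mathbf i}=f_{i_k}\cdots f_{i_1}$. $\pi_\mu(t)=t\mu$; concatenation $(\pi_1\otimes\cdots\otimes\pi_n)(t)=\sum_{l<m}\pi_l(1)+\pi_m(nt-m+1)$ on $[\frac{m-1}n,\frac mn]$. Kac–Moody side: $\tilde I=\{(i,1)\}_{i\in I^{re}}\sqcup\{(i,m)\}_{i\in I^{im},m\ge1}$; $\tilde A$ with $2$ on the diagonal and $\tilde a_{(i,m),(j,n)}=a_{ij}$ otherwise; Cartan datum $(\tilde A,\{\tilde\alpha_{(i,m)}\},\{\tilde\alpha^\vee_{(i,m)}\},\tilde P,\tilde P^\vee)$; for $\mu\in\mathcal WP^+$ fixed $\tilde\mu\in\tilde P$ with $\tilde\alpha^\vee_{(i,m)}(\tilde\mu)=\alpha_i^\vee(\mu)$ for all $(i,m)$. For paths $\tilde\pi$ into $(\tilde{\mathfrak h}_{\mathbb R})^*$, $\tilde H_{(i,m)}^{\tilde\pi}(t)=\tilde\alpha^\vee_{(i,m)}(\tilde\pi(t))$, and root operators $f_{(i,m)}$ defined by the same formulas. $\mathbf m$ associated with $\mathbf i$: $m_s=1$ if $i_s\in I^{re}$, $m_s=\#\{t\le s:i_t=i_s\}$ if $i_s\in I^{im}$; $F_{(\mathbf i,\mathbf m)}=f_{(i_k,m_k)}\cdots f_{(i_1,m_1)}$. *)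

theory Defs
  imports Complex_Main "HOL-Library.Countable"
begin

definition borcherds_cartan :: "('i \<Rightarrow> 'i \<Rightarrow> int) \<Rightarrow> bool" where
  "borcherds_cartan a \<longleftrightarrow>
     (\<forall>i. a i i = 2 \<or> a i i \<le> 0) \<and>
     (\<forall>i j. i \<noteq> j \<longrightarrow> a i j \<le> 0) \<and>
     (\<forall>i j. a i j = 0 \<longleftrightarrow> a j i = 0)"

definition cartan_datum ::
  "'k set \<Rightarrow> ('k \<Rightarrow> 'k \<Rightarrow> int) \<Rightarrow> ('k \<Rightarrow> 'v::real_vector) \<Rightarrow> ('k \<Rightarrow> 'v \<Rightarrow> real) \<Rightarrow> 'v set \<Rightarrow> bool"
where
  "cartan_datum K A alpha cor P \<longleftrightarrow>
     (\<forall>i\<in>K. linear (cor i)) \<and>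
     (\<forall>i\<in>K. \<forall>j\<in>K. cor i (alpha j) = real_of_int (A i j)) \<and>
     (\<forall>S c. finite S \<longrightarrow> S \<subseteq> K \<longrightarrow> (\<Sum>i\<in>S. c i *\<^sub>R alpha i) = 0 \<longrightarrow> (\<forall>i\<in>S. c i = 0)) \<and>
     (\<forall>S c. finite S \<longrightarrow> S \<subseteq> K \<longrightarrow> (\<forall>v. (\<Sum>i\<in>S. c i * cor i v) = 0) \<longrightarrow> (\<forall>i\<in>S. c i = 0)) \<and>
     0 \<in> P \<and> (\<forall>x\<in>P. \<forall>y\<in>P. x + y \<in> P \<and> x - y \<in> P) \<and>
     (\<forall>i\<in>K. alpha i \<in> P) \<and>
     (\<forall>i\<in>K. \<forall>lam\<in>P. cor i lam \<in> \<int>) \<and>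
     span P = UNIV"

definition dominant :: "('i \<Rightarrow> 'v \<Rightarrow> real) \<Rightarrow> 'v set \<Rightarrow> 'v set" where
  "dominant cor P = {lam\<in>P. \<forall>i. cor i lam \<ge> 0}"

definition refl_r :: "('i \<Rightarrow> 'v::real_vector) \<Rightarrow> ('i \<Rightarrow> 'v \<Rightarrow> real) \<Rightarrow> 'i \<Rightarrow> 'v \<Rightarrow> 'v" where
  "refl_r alpha cor i mu = mu - cor i mu *\<^sub>R alpha i"

text \<open>The orbit W P^+: images of dominant weights under words in the generators r_i.\<close>
definition WPplus :: "('i \<Rightarrow> 'v::real_vector) \<Rightarrow> ('i \<Rightarrow> 'v \<Rightarrow> real) \<Rightarrow> 'v set \<Rightarrow> 'v set" where
  "WPplus alpha cor P = {foldr (refl_r alpha cor) ws lam | ws lam. lam \<in> dominant cor P}"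

definition Itil :: "('i \<Rightarrow> 'i \<Rightarrow> int) \<Rightarrow> ('i \<times> nat) set" where
  "Itil a = {(i, 1) | i. a i i = 2} \<union> {(i, m) | i m. a i i \<noteq> 2 \<and> m \<ge> 1}"

definition Atil :: "('i \<Rightarrow> 'i \<Rightarrow> int) \<Rightarrow> ('i \<times> nat) \<Rightarrow> ('i \<times> nat) \<Rightarrow> int" where
  "Atil a x y = (if x = y then 2 else a (fst x) (fst y))"

text \<open>m associated with i; the list ii = [i_1, ..., i_k] (application order).\<close>
definition mseq :: "('i \<Rightarrow> 'i \<Rightarrow> int) \<Rightarrow> 'i list \<Rightarrow> nat list" where
  "mseq a ii = map (\<lambda>s. if a (ii ! s) (ii ! s) = 2 then 1
                        else length (filter (\<lambda>j. j = ii ! s) (take (Suc s) ii))) [0..<length ii]"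

text \<open>Paths are functions real => 'v (only values on [0,1] matter); None is the extra element 0.\<close>

definition pi_lin :: "'v::real_vector \<Rightarrow> real \<Rightarrow> 'v" where
  "pi_lin mu = (\<lambda>t. t *\<^sub>R mu)"

definition concat_paths :: "(real \<Rightarrow> 'v::real_vector) list \<Rightarrow> real \<Rightarrow> 'v" where
  "concat_paths ps t =
     (let n = length ps; m = max 1 (min n (nat \<lceil>real n * t\<rceil>))
      in (\<Sum>l<m - 1. (ps ! l) 1) + (ps ! (m - 1)) (real n * t - real m + 1))"

definition Hfun :: "('k \<Rightarrow> 'v \<Rightarrow> real) \<Rightarrow> 'k \<Rightarrow> (real \<Rightarrow> 'v) \<Rightarrow> real \<Rightarrow> real" where
  "Hfun cor i p t = cor i (p t)"

definition mmin :: "('k \<Rightarrow> 'v \<Rightarrow> real) \<Rightarrow> 'k \<Rightarrow> (real \<Rightarrow> 'v) \<Rightarrow> real" where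
  "mmin cor i p = Inf {x. \<exists>t\<in>{0..1}. x = Hfun cor i p t \<and> x \<in> \<int>}"

definition fplus :: "('k \<Rightarrow> 'v \<Rightarrow> real) \<Rightarrow> 'k \<Rightarrow> (real \<Rightarrow> 'v) \<Rightarrow> real" where
  "fplus cor i p = Sup {t\<in>{0..1}. Hfun cor i p t = mmin cor i p}"

definition fminus :: "('k \<Rightarrow> 'v \<Rightarrow> real) \<Rightarrow> 'k \<Rightarrow> (real \<Rightarrow> 'v) \<Rightarrow> real" where
  "fminus cor i p = Inf {t\<in>{fplus cor i p..1}. Hfun cor i p t = mmin cor i p + 1}"

definition fop :: "('k \<Rightarrow> 'v::real_vector) \<Rightarrow> ('k \<Rightarrow> 'v \<Rightarrow> real) \<Rightarrow> 'k
                   \<Rightarrow> (real \<Rightarrow> 'v) option \<Rightarrow> (real \<Rightarrow> 'v) option" where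
  "fop alpha cor i po = (case po of None \<Rightarrow> None | Some p \<Rightarrow>
     (if fplus cor i p = 1 then None
      else Some (\<lambda>t. if t \<le> fplus cor i p then p t
                     else if t \<le> fminus cor i p then p t - (Hfun cor i p t - mmin cor i p) *\<^sub>R alpha i
                     else p t - alpha i)))"

text \<open>F_i = f_{i_k} ... f_{i_1} for ii = [i_1, ..., i_k].\<close>
definition Fseq :: "('k \<Rightarrow> 'v::real_vector) \<Rightarrow> ('k \<Rightarrow> 'v \<Rightarrow> real) \<Rightarrow> 'k list
                    \<Rightarrow> (real \<Rightarrow> 'v) option \<Rightarrow> (real \<Rightarrow> 'v) option" where
  "Fseq alpha cor ii po = fold (fop alpha cor) ii po"

end

theory Submission
  imports Defs
begin

text \<open>A root operator \<open>f\<^sub>i\<close> sees a path \<open>p\<close> only through its height function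
  \<open>H\<^sub>i\<close>: this decides whether \<open>f\<^sub>i p = 0\<close> and yields a scalar function \<open>g\<close> with
  \<open>f\<^sub>i p = p - g \<alpha>\<^sub>i\<close>. So \<open>f\<^sub>i\<close> on a path and \<open>f\<^bsub>(i,m)\<^esub>\<close> on its lift proceed in parallel
  whenever the coroot \<open>(i, m)\<close> sees the lift exactly as \<open>i\<close> sees the original.
  In the lifted datum the coroot \<open>x\<close> pairs with the root \<open>y\<close> as \<open>a\<close> pairs
  \<open>fst x\<close> with \<open>fst y\<close>, except when \<open>x = y\<close> is imaginary. Hence this agreement survives
  every step for all real indices and all imaginary indices not applied yet, and counting
  occurrences makes each imaginary \<open>(i\<^sub>s, m\<^sub>s)\<close> new at step \<open>s\<close>.\<close>

definition fop_coeff :: "('k \<Rightarrow> 'v \<Rightarrow> real) \<Rightarrow> 'k \<Rightarrow> (real \<Rightarrow> 'v) \<Rightarrow> real \<Rightarrow> real" where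
  "fop_coeff cor i p t =
     (if t \<le> fplus cor i p then 0
      else if t \<le> fminus cor i p then Hfun cor i p t - mmin cor i p else 1)"

lemma fop_None_iff: "fop alpha cor i (Some p) = None \<longleftrightarrow> fplus cor i p = 1"
  by (simp add: fop_def)

lemma fop_Some_eq:
  "fplus cor i p \<noteq> 1 \<Longrightarrow>
     fop alpha cor i (Some p) = Some (\<lambda>t. p t - fop_coeff cor i p t *\<^sub>R alpha i)"
  by (auto simp: fop_def fop_coeff_def)

lemma fplus_fop_coeff_Hfun_cong:
  assumes "Hfun cor i p = Hfun cor' j q"
  shows "fplus cor i p = fplus cor' j q" and "fop_coeff cor i p = fop_coeff cor' j q"
proof -
  have mmin: "mmin cor i p = mmin cor' j q" unfolding mmin_def assms ..
  show fplus: "fplus cor i p = fplus cor' j q" unfolding fplus_def assms mmin ..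
  have fminus: "fminus cor i p = fminus cor' j q" unfolding fminus_def assms mmin fplus ..
  show "fop_coeff cor i p = fop_coeff cor' j q"
    unfolding fop_coeff_def assms mmin fplus fminus ..
qed

lemma fop_None [simp]: "fop alpha cor i None = None"
  by (simp add: fop_def)

lemma Fseq_None [simp]: "Fseq alpha cor xs None = None"
  unfolding Fseq_def by (induction xs) auto

lemma Fseq_snoc: "Fseq alpha cor (xs @ [x]) po = fop alpha cor x (Fseq alpha cor xs po)"
  unfolding Fseq_def by simp

lemma Fseq_take_neq_None:
  assumes "Fseq alpha cor xs po \<noteq> None"
  shows "Fseq alpha cor (take k xs) po \<noteq> None"
proof
  assume "Fseq alpha cor (take k xs) po = None"
  then have "Fseq alpha cor (take k xs @ drop k xs) po = None"
    unfolding Fseq_def fold_append by (simp add: Fseq_None[unfolded Fseq_def])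
  with assms show False by simp
qed

lemma linear_concat_paths:
  assumes "linear f" "ps \<noteq> []"
  shows "f (concat_paths ps t) = concat_paths (map (\<lambda>p. f \<circ> p) ps) t"
proof -
  define m where "m = max 1 (min (length ps) (nat \<lceil>real (length ps) * t\<rceil>))"
  have "1 \<le> m" "m \<le> length ps"
    using assms(2) by (auto simp: m_def Suc_le_eq)
  then have m: "m - 1 < length ps" by linarith
  have L: "concat_paths ps t
      = (\<Sum>l<m - 1. (ps ! l) 1) + (ps ! (m - 1)) (real (length ps) * t - real m + 1)"
    unfolding concat_paths_def Let_def m_def ..
  have R: "concat_paths (map (\<lambda>p. f \<circ> p) ps) t
      = (\<Sum>l<m - 1. f ((ps ! l) 1)) + f ((ps ! (m - 1)) (real (length ps) * t - real m + 1))"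
    unfolding concat_paths_def Let_def length_map m_def[symmetric]
    using m by (simp add: m_def[symmetric])
  show ?thesis
    unfolding L R by (simp add: linear_add[OF assms(1)] linear_sum[OF assms(1)])
qed

lemma linear_concat_pi_lin:
  assumes "linear f" "lams \<noteq> []"
  shows "f (concat_paths (map pi_lin lams) t) = concat_paths (map pi_lin (map f lams)) t"
proof -
  have "(\<lambda>p. f \<circ> p) \<circ> pi_lin = pi_lin \<circ> f"
    by (simp add: fun_eq_iff pi_lin_def linear_scale[OF assms(1)])
  then show ?thesis
    using linear_concat_paths[OF assms(1), of "map pi_lin lams"] assms(2) by simp
qed

lemma concat_pi_lin_eq_if_map_eq:
  assumes "linear f" "linear g" "lams \<noteq> []" "map f tlams = map g lams"
  shows "f (concat_paths (map pi_lin tlams) t) = g (concat_paths (map pi_lin lams) t)"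
proof -
  have "tlams \<noteq> []" using assms(3,4) by auto
  then show ?thesis
    using assms linear_concat_pi_lin[of f tlams t] linear_concat_pi_lin[of g lams t] by simp
qed

lemma length_mseq [simp]: "length (mseq a ii) = length ii"
  by (simp add: mseq_def)

lemma mseq_snoc:
  "mseq a (ii @ [i]) = mseq a ii @ [if a i i = 2 then 1 else Suc (count_list ii i)]"
proof -
  have "mseq a (ii @ [i]) = map (\<lambda>s. if a (ii ! s) (ii ! s) = 2 then 1
      else length (filter (\<lambda>j. j = ii ! s) (take (Suc s) ii))) [0..<length ii]
      @ [if a i i = 2 then 1 else length (filter (\<lambda>j. j = i) (ii @ [i]))]"
    by (auto simp: mseq_def nth_append)
  also have "length (filter (\<lambda>j. j = i) (ii @ [i])) = Suc (count_list ii i)"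
    by (induction ii) auto
  finally show ?thesis by (simp add: mseq_def)
qed

lemma zip_mseq_snoc:
  "zip (ii @ [i]) (mseq a (ii @ [i]))
     = zip ii (mseq a ii) @ [(i, if a i i = 2 then 1 else Suc (count_list ii i))]"
  by (simp add: mseq_snoc)

lemma mem_zip_mseq:
  assumes "(j, m) \<in> set (zip ii (mseq a ii))"
  shows "if a j j = 2 then m = 1 else 1 \<le> m \<and> m \<le> count_list ii j"
  using assms
proof (induction ii rule: rev_induct)
  case (snoc i ii)
  then show ?case by (fastforce simp: zip_mseq_snoc split: if_splits)
qed simp

lemma set_zip_mseq_subset_Itil: "set (zip ii (mseq a ii)) \<subseteq> Itil a"
proof
  fix z assume z: "z \<in> set (zip ii (mseq a ii))"
  obtain j m where [simp]: "z = (j, m)" by fastforce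
  from z mem_zip_mseq[of j m ii a] show "z \<in> Itil a"
    by (auto simp: Itil_def split: if_split_asm)
qed

lemma distinct_imaginary_zip_mseq:
  "distinct (filter (\<lambda>x. a (fst x) (fst x) \<noteq> 2) (zip ii (mseq a ii)))"
proof (induction ii rule: rev_induct)
  case (snoc i ii)
  have "(i, Suc (count_list ii i)) \<notin> set (zip ii (mseq a ii))" if "a i i \<noteq> 2"
    using mem_zip_mseq[of i "Suc (count_list ii i)" ii a] that by auto
  with snoc show ?case by (simp add: zip_mseq_snoc)
qed simp

lemma Atil_eq_a: "x \<noteq> y \<or> a (fst x) (fst x) = 2 \<Longrightarrow> Atil a x y = a (fst x) (fst y)"
  by (auto simp: Atil_def)

locale cartan_lift =
  fixes a :: "'i \<Rightarrow> 'i \<Rightarrow> int"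
    and alpha :: "'i \<Rightarrow> 'v::real_vector" and cor :: "'i \<Rightarrow> 'v \<Rightarrow> real"
    and talpha :: "'i \<times> nat \<Rightarrow> 'w::real_vector" and tcor :: "'i \<times> nat \<Rightarrow> 'w \<Rightarrow> real"
  assumes linear_cor: "linear (cor i)"
    and linear_tcor: "x \<in> Itil a \<Longrightarrow> linear (tcor x)"
    and cor_alpha: "cor i (alpha j) = real_of_int (a i j)"
    and tcor_talpha: "x \<in> Itil a \<Longrightarrow> y \<in> Itil a \<Longrightarrow> tcor x (talpha y) = real_of_int (Atil a x y)"
begin

lemma Fseq_lift:
  assumes zz: "set zz \<subseteq> Itil a" "distinct (filter (\<lambda>x. a (fst x) (fst x) \<noteq> 2) zz)"
    and init: "\<And>x t. x \<in> Itil a \<Longrightarrow> tcor x (q0 t) = cor (fst x) (p0 t)"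
    and p: "Fseq alpha cor (map fst zz) (Some p0) = Some p"
  shows "\<exists>q. Fseq talpha tcor zz (Some q0) = Some q \<and>
    (\<forall>x\<in>Itil a. a (fst x) (fst x) = 2 \<or> x \<notin> set zz \<longrightarrow>
       (\<forall>t. tcor x (q t) = cor (fst x) (p t)))"
  using zz p
proof (induction zz arbitrary: p rule: rev_induct)
  case Nil
  then show ?case using init by (simp add: Fseq_def)
next
  case (snoc z zz)
  obtain p1 where p1: "Fseq alpha cor (map fst zz) (Some p0) = Some p1"
    using snoc.prems(3) by (cases "Fseq alpha cor (map fst zz) (Some p0)") (auto simp: Fseq_snoc)
  have zI: "z \<in> Itil a" using snoc.prems(1) by simp
  from snoc.IH[OF _ _ p1] snoc.prems(1,2) obtain q1 where
    q1: "Fseq talpha tcor zz (Some q0) = Some q1"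
    and inv: "\<forall>x\<in>Itil a. a (fst x) (fst x) = 2 \<or> x \<notin> set zz \<longrightarrow>
       (\<forall>t. tcor x (q1 t) = cor (fst x) (p1 t))"
    by auto
  have "a (fst z) (fst z) = 2 \<or> z \<notin> set zz" using snoc.prems(2) by auto
  then have H: "Hfun tcor z q1 = Hfun cor (fst z) p1"
    using inv zI by (auto simp: Hfun_def)
  define g where "g = fop_coeff cor (fst z) p1"
  have step: "fop alpha cor (fst z) (Some p1) = Some p"
    using snoc.prems(3) p1 by (simp add: Fseq_snoc)
  then have fp: "fplus cor (fst z) p1 \<noteq> 1"
    using fop_None_iff[of alpha cor "fst z" p1] by auto
  with step have p_eq: "p = (\<lambda>t. p1 t - g t *\<^sub>R alpha (fst z))"
    by (simp add: fop_Some_eq g_def)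
  define q where "q = (\<lambda>t. q1 t - g t *\<^sub>R talpha z)"
  have "Fseq talpha tcor (zz @ [z]) (Some q0) = Some q"
    using fp fplus_fop_coeff_Hfun_cong[OF H]
    by (simp add: Fseq_snoc q1 fop_Some_eq q_def g_def)
  moreover have "tcor x (q t) = cor (fst x) (p t)"
    if x: "x \<in> Itil a" "a (fst x) (fst x) = 2 \<or> x \<notin> set (zz @ [z])" for x t
  proof -
    have IH: "tcor x (q1 t) = cor (fst x) (p1 t)" using inv x by auto
    have A: "Atil a x z = a (fst x) (fst z)" using x(2) by (intro Atil_eq_a) auto
    have "tcor x (q t) = tcor x (q1 t) - g t * Atil a x z"
      using linear_tcor[OF x(1)] tcor_talpha[OF x(1) zI]
      by (simp add: q_def linear_diff linear_scale)
    also have "\<dots> = cor (fst x) (p1 t) - g t * a (fst x) (fst z)"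
      by (simp add: IH A)
    also have "\<dots> = cor (fst x) (p t)"
      using linear_cor[of "fst x"] by (simp add: p_eq linear_diff linear_scale cor_alpha)
    finally show ?thesis .
  qed
  ultimately show ?case by blast
qed

lemma Hfun_Fseq_lift:
  assumes zz: "set zz \<subseteq> Itil a" "distinct (filter (\<lambda>x. a (fst x) (fst x) \<noteq> 2) zz)"
    and init: "\<And>x t. x \<in> Itil a \<Longrightarrow> tcor x (q0 t) = cor (fst x) (p0 t)"
    and ne: "Fseq alpha cor (map fst zz) (Some p0) \<noteq> None"
    and k: "k < length zz"
  shows "Hfun cor (fst (zz ! k)) (the (Fseq alpha cor (take k (map fst zz)) (Some p0))) t
       = Hfun tcor (zz ! k) (the (Fseq talpha tcor (take k zz) (Some q0))) t"
proof -
  have split: "take (Suc k) zz = take k zz @ [zz ! k]"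
    using k by (simp add: take_Suc_conv_app_nth)
  have "distinct (filter (\<lambda>x. a (fst x) (fst x) \<noteq> 2) (take (Suc k) zz))"
    using zz(2) by (metis append_take_drop_id distinct_append filter_append)
  then have dist: "distinct (filter (\<lambda>x. a (fst x) (fst x) \<noteq> 2) (take k zz))"
    and fresh: "a (fst (zz ! k)) (fst (zz ! k)) = 2 \<or> zz ! k \<notin> set (take k zz)"
    unfolding split by auto
  have zI: "zz ! k \<in> Itil a" using zz(1) k by auto
  obtain p where p: "Fseq alpha cor (map fst (take k zz)) (Some p0) = Some p"
    using Fseq_take_neq_None[OF ne, of k] by (auto simp: take_map)
  have "set (take k zz) \<subseteq> Itil a" using zz(1) by (auto dest: in_set_takeD)
  from Fseq_lift[OF this dist init p] obtain q where
    q: "Fseq talpha tcor (take k zz) (Some q0) = Some q"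
    and inv: "\<forall>x\<in>Itil a. a (fst x) (fst x) = 2 \<or> x \<notin> set (take k zz) \<longrightarrow>
       (\<forall>t. tcor x (q t) = cor (fst x) (p t))"
    by blast
  from inv zI fresh have "tcor (zz ! k) (q t) = cor (fst (zz ! k)) (p t)" by blast
  with p q show ?thesis by (simp add: Hfun_def take_map)
qed

end

lemma cartan_lift_of_datum:
  assumes "cartan_datum UNIV a alpha cor P" "cartan_datum (Itil a) (Atil a) talpha tcor tP"
  shows "cartan_lift a alpha cor talpha tcor"
proof (rule cartan_lift.intro)
  show "linear (cor i)" "cor i (alpha j) = real_of_int (a i j)" for i j
    using assms(1) by (simp_all add: cartan_datum_def)
  show "linear (tcor x)" if "x \<in> Itil a" for x
    using assms(2) that by (simp add: cartan_datum_def)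
  show "tcor x (talpha y) = real_of_int (Atil a x y)" if "x \<in> Itil a" "y \<in> Itil a" for x y
    using assms(2) that by (simp add: cartan_datum_def)
qed

theorem lemma4p1p5:
  fixes a :: "'i::countable \<Rightarrow> 'i \<Rightarrow> int"
    and alpha :: "'i \<Rightarrow> 'v::real_vector" and cor :: "'i \<Rightarrow> 'v \<Rightarrow> real" and P :: "'v set"
    and talpha :: "'i \<times> nat \<Rightarrow> 'w::real_vector" and tcor :: "'i \<times> nat \<Rightarrow> 'w \<Rightarrow> real"
    and tP :: "'w set"
    and lams :: "'v list" and tlams :: "'w list" and ii :: "'i list"
  assumes "borcherds_cartan a"
    and "cartan_datum UNIV a alpha cor P"
    and "cartan_datum (Itil a) (Atil a) talpha tcor tP"
    and "lams \<noteq> []"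
    and "set lams \<subseteq> WPplus alpha cor P"
    and "length tlams = length lams"
    and "\<forall>j<length lams. tlams ! j \<in> tP \<and>
           (\<forall>x\<in>Itil a. tcor x (tlams ! j) = cor (fst x) (lams ! j))"
    and "Fseq alpha cor ii (Some (concat_paths (map pi_lin lams))) \<noteq> None"
  shows "Fseq talpha tcor (zip ii (mseq a ii)) (Some (concat_paths (map pi_lin tlams))) \<noteq> None
     \<and> (\<forall>s\<in>{1..length ii}. \<forall>t\<in>{0..1}.
          Hfun cor (ii ! (s - 1))
            (the (Fseq alpha cor (take (s - 1) ii) (Some (concat_paths (map pi_lin lams))))) t
        = Hfun tcor (ii ! (s - 1), mseq a ii ! (s - 1))
            (the (Fseq talpha tcor (take (s - 1) (zip ii (mseq a ii)))
                   (Some (concat_paths (map pi_lin tlams))))) t)"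
proof -
  interpret cartan_lift a alpha cor talpha tcor
    using cartan_lift_of_datum[OF assms(2,3)] .
  let ?zz = "zip ii (mseq a ii)"
  let ?p0 = "concat_paths (map pi_lin lams)" and ?q0 = "concat_paths (map pi_lin tlams)"
  have init: "tcor x (?q0 t) = cor (fst x) (?p0 t)" if x: "x \<in> Itil a" for x t
    using assms(6,7) x
    by (intro concat_pi_lin_eq_if_map_eq linear_tcor linear_cor assms(4))
      (simp_all add: list_eq_iff_nth_eq)
  note lift = set_zip_mseq_subset_Itil distinct_imaginary_zip_mseq init
  have ne: "Fseq alpha cor (map fst ?zz) (Some ?p0) \<noteq> None"
    using assms(8) by simp
  then obtain p where p: "Fseq alpha cor (map fst ?zz) (Some ?p0) = Some p"
    by blast
  show ?thesis
  proof (intro conjI ballI)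
    show "Fseq talpha tcor ?zz (Some ?q0) \<noteq> None"
      using Fseq_lift[OF lift p] by auto
  next
    fix s t assume "s \<in> {1..length ii}"
    then have "s - 1 < length ?zz" by auto
    from Hfun_Fseq_lift[OF lift ne this, of t] this
    show "Hfun cor (ii ! (s - 1)) (the (Fseq alpha cor (take (s - 1) ii) (Some ?p0))) t
        = Hfun tcor (ii ! (s - 1), mseq a ii ! (s - 1))
            (the (Fseq talpha tcor (take (s - 1) ?zz) (Some ?q0))) t"
      by simp
  qed
qed

end
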